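(* Let $n>5f$. The convergence algorithm described in the context, executed by $n$ robots of which at most $f$ are Byzantine, in the CORDA model under a fully asynchronous scheduler, is cautious.
   Context: Setting: $n$ robots on the real line, of which at most $f$ are Byzantine (arbitrary behaviour, positions chosen by an adversary). Robots are anonymous, oblivious, have no common orientation, and have unlimited visibility with strong multiplicity detection. Each correct robot runs Look–Compute–Move cycles. In a Move, the adversary may stop robot $i$ only after it has moved at least $\delta_i>0$ toward its destination (or reached it). In the CORDA model, phases of different robots interleave arbitrarily, so computations may use outdated snapshots. A fully asynchronous scheduler only guarantees that every robot is activated infinitely often. Algorithm: with snapshot sorted $P_1\le\dots\le P_n$ and own position $x_i$, robot $i$ is elected iff $x_i\le P_{f+1}$ or $x_i\ge P_{n-f}$. If elected, it moves toward the midpoint of $\min(x_i,P_{2f+1})$ and $\max(x_i,P_{n-2f})$. This midpoint is the center of $trim^i_{2f}(P)$, the multiset obtained by removing, among the $2f$ smallest positions, those smaller than $x_i$, and, among the $2f$ largest positions, those larger than $x_i$. Cautious: let $D_i(t)$ be the last destination computed by robot $i$ at or before $t$, and $U^i(t)$ the positions of correct robots in $i$'s last observation. The algorithm is cautious if both of the following hold: - $D_i(t)\in[\min U^i(t),\max U^i(t)]$ for every correct $i$ and every $t$; - whenever the correct robots are not all at one point at time $t$, some correct robot $i$ at some time $t'>t$ has $D_i(t')$ different from its position. *)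

theory Defs
  imports "HOL-Analysis.Analysis"
begin

text \<open>
  Robots are indexed by \<open>{..<n}\<close>; \<open>B\<close> is the set of Byzantine robots.
  \<open>pos t j\<close> is the position of robot \<open>j\<close> at time \<open>t\<close> (Byzantine positions are arbitrary).
  For a correct robot \<open>i\<close>, its \<open>k\<close>-th cycle starts with an (instantaneous) Look at time
  \<open>L i k\<close>, whose snapshot determines the destination; its Move ends at time \<open>E i k\<close>.
  Between \<open>L i k\<close> and \<open>E i k\<close> the robot may wait (Compute delay) and moves continuously
  and monotonically toward its destination; between \<open>E i k\<close> and \<open>L i (k+1)\<close> it stays still.
\<close>

text \<open>The \<open>m\<close>-th smallest element (1-based) of a list of reals.\<close>
definition kth :: "real list \<Rightarrow> nat \<Rightarrow> real" where
  "kth xs m = sort xs ! (m - 1)"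

text \<open>The algorithm: snapshot \<open>P\<close> (all \<open>n\<close> positions) and own position \<open>x\<close>.
  Non-elected robots compute their own position as destination (null move).\<close>
definition dest :: "nat \<Rightarrow> nat \<Rightarrow> real list \<Rightarrow> real \<Rightarrow> real" where
  "dest n f P x =
     (if x \<le> kth P (f + 1) \<or> x \<ge> kth P (n - f)
      then (min x (kth P (2 * f + 1)) + max x (kth P (n - 2 * f))) / 2
      else x)"

definition snapshot :: "nat \<Rightarrow> (real \<Rightarrow> nat \<Rightarrow> real) \<Rightarrow> real \<Rightarrow> real list" where
  "snapshot n pos t = map (pos t) [0..<n]"

definition cycle_dest ::
  "nat \<Rightarrow> nat \<Rightarrow> (real \<Rightarrow> nat \<Rightarrow> real) \<Rightarrow> (nat \<Rightarrow> nat \<Rightarrow> real) \<Rightarrow> nat \<Rightarrow> nat \<Rightarrow> real" where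
  "cycle_dest n f pos L i k = dest n f (snapshot n pos (L i k)) (pos (L i k) i)"

definition corda_execution ::
  "nat \<Rightarrow> nat \<Rightarrow> nat set \<Rightarrow> (nat \<Rightarrow> real) \<Rightarrow> (real \<Rightarrow> nat \<Rightarrow> real)
   \<Rightarrow> (nat \<Rightarrow> nat \<Rightarrow> real) \<Rightarrow> (nat \<Rightarrow> nat \<Rightarrow> real) \<Rightarrow> bool" where
  "corda_execution n f B \<delta> pos L E \<longleftrightarrow>
     B \<subseteq> {..<n} \<and> card B \<le> f \<and>
     (\<forall>i \<in> {..<n} - B.
        \<delta> i > 0 \<and>
        0 \<le> L i 0 \<and>
        (\<forall>k. L i k \<le> E i k \<and> E i k \<le> L i (Suc k) \<and> L i k < L i (Suc k)) \<and>
        \<comment> \<open>fairness: infinitely many activations, at unbounded times\<close>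
        (\<forall>T. \<exists>k. T < L i k) \<and>
        \<comment> \<open>before the first Look the robot does not move\<close>
        (\<forall>t \<in> {0..L i 0}. pos t i = pos 0 i) \<and>
        (\<forall>k. let s = pos (L i k) i; d = cycle_dest n f pos L i k in
           \<comment> \<open>move phase: continuous, monotone toward the destination, no overshoot\<close>
           continuous_on {L i k..E i k} (\<lambda>t. pos t i) \<and>
           (\<forall>t \<in> {L i k..E i k}. min s d \<le> pos t i \<and> pos t i \<le> max s d) \<and>
           (\<forall>t1 t2. L i k \<le> t1 \<and> t1 \<le> t2 \<and> t2 \<le> E i k \<longrightarrow>
                     \<bar>d - pos t2 i\<bar> \<le> \<bar>d - pos t1 i\<bar>) \<and>
           \<comment> \<open>the adversary stops the robot only after it moved at least \<open>\<delta> i\<close> or reached \<open>d\<close>\<close>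
           (pos (E i k) i = d \<or> \<bar>pos (E i k) i - s\<bar> \<ge> \<delta> i) \<and>
           \<comment> \<open>idle between the end of the Move and the next Look\<close>
           (\<forall>t \<in> {E i k..L i (Suc k)}. pos t i = pos (E i k) i)))"

definition last_look :: "(nat \<Rightarrow> nat \<Rightarrow> real) \<Rightarrow> nat \<Rightarrow> real \<Rightarrow> nat" where
  "last_look L i t = (GREATEST k. L i k \<le> t)"

definition Dest ::
  "nat \<Rightarrow> nat \<Rightarrow> (real \<Rightarrow> nat \<Rightarrow> real) \<Rightarrow> (nat \<Rightarrow> nat \<Rightarrow> real) \<Rightarrow> nat \<Rightarrow> real \<Rightarrow> real" where
  "Dest n f pos L i t = cycle_dest n f pos L i (last_look L i t)"

definition Obs ::
  "nat \<Rightarrow> nat set \<Rightarrow> (real \<Rightarrow> nat \<Rightarrow> real) \<Rightarrow> (nat \<Rightarrow> nat \<Rightarrow> real) \<Rightarrow> nat \<Rightarrow> real \<Rightarrow> real set" where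
  "Obs n B pos L i t = (\<lambda>j. pos (L i (last_look L i t)) j) ` ({..<n} - B)"

definition cautious ::
  "nat \<Rightarrow> nat \<Rightarrow> nat set \<Rightarrow> (real \<Rightarrow> nat \<Rightarrow> real) \<Rightarrow> (nat \<Rightarrow> nat \<Rightarrow> real) \<Rightarrow> bool" where
  "cautious n f B pos L \<longleftrightarrow>
     (\<forall>i \<in> {..<n} - B. \<forall>t. L i 0 \<le> t \<longrightarrow>
        Dest n f pos L i t \<in> {Min (Obs n B pos L i t) .. Max (Obs n B pos L i t)}) \<and>
     (\<forall>t \<ge> 0. (\<exists>j \<in> {..<n} - B. \<exists>j' \<in> {..<n} - B. pos t j \<noteq> pos t j') \<longrightarrow>
        (\<exists>i \<in> {..<n} - B. \<exists>t' > t. L i 0 \<le> t' \<and> Dest n f pos L i t' \<noteq> pos t' i))"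

end

theory Submission
  imports Defs
begin

text \<open>
  Since at most \<open>f\<close> positions are Byzantine, the interval between the \<open>(2f+1)\<close>-th and the
  \<open>(n-2f)\<close>-th smallest observed positions lies in the hull of the correct ones, and so
  does every destination.

  For progress, suppose that from time \<open>t\<close> on every correct robot always computes its own
  position as destination. A correct trajectory is continuous (moves are continuous, idle
  phases constant), and after \<open>t\<close> it only takes values among the countably many destinations
  of that robot, so it is constant. Consider the next snapshots of a correct robot at the
  minimum \<open>m\<close> and of one at the maximum \<open>M\<close> of the correct positions, and let \<open>b \<le> f\<close>
  be the number of Byzantine robots. The first stays put only if at least \<open>n - 2f\<close> robots
  lie at or below \<open>m\<close>, so at least \<open>n - 2f - b\<close> correct robots sit at \<open>m\<close>; the second
  only if at most \<open>2f\<close> robots lie strictly below \<open>M\<close>, so at least \<open>n - b - 2f\<close> correct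
  robots sit at \<open>M\<close>. If \<open>m < M\<close> these groups are disjoint, whence
  \<open>2n - 4f - 2b \<le> n - b\<close>, i.e. \<open>n \<le> 4f + b \<le> 5f\<close>.
\<close>

lemma sorted_nth_downward_closed_iff:
  fixes ys :: "'a::linorder list"
  assumes "sorted ys" "i < length ys" "\<And>x y. x \<le> y \<Longrightarrow> Q y \<Longrightarrow> Q x"
  shows "Q (ys ! i) \<longleftrightarrow> i < length (filter Q ys)"
  using assms
proof (induction ys arbitrary: i)
  case Nil
  then show ?case by simp
next
  case (Cons y ys)
  show ?case
  proof (cases "Q y")
    case True
    with Cons show ?thesis by (cases i) auto
  next
    case False
    with Cons.prems have "\<forall>z \<in> set (y # ys). \<not> Q z" by auto
    then have "\<not> Q ((y # ys) ! i)"
      using Cons.prems(2) nth_mem by blast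
    with \<open>\<forall>z \<in> set (y # ys). \<not> Q z\<close> show ?thesis by (simp add: filter_empty_conv)
  qed
qed

lemma kth_downward_closed_iff:
  assumes "1 \<le> m" "m \<le> length xs" "\<And>x y. x \<le> y \<Longrightarrow> Q y \<Longrightarrow> Q x"
  shows "Q (kth xs m) \<longleftrightarrow> m \<le> length (filter Q xs)"
proof -
  have "Q (kth xs m) \<longleftrightarrow> m - 1 < length (filter Q (sort xs))"
    unfolding kth_def using assms by (intro sorted_nth_downward_closed_iff) auto
  then show ?thesis
    using assms(1) by (auto simp: filter_sort)
qed

lemma length_filter_snapshot:
  "length (filter Q (snapshot n pos s)) = card {j. j < n \<and> Q (pos s j)}"
  unfolding snapshot_def length_filter_conv_card
  by (intro arg_cong[where f = card]) auto

lemma kth_snapshot_less_iff: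
  assumes "1 \<le> m" "m \<le> n"
  shows "kth (snapshot n pos s) m < a \<longleftrightarrow> m \<le> card {j. j < n \<and> pos s j < a}"
  using kth_downward_closed_iff[of m "snapshot n pos s" "\<lambda>y. y < a"] assms
  by (simp add: length_filter_snapshot) (simp add: snapshot_def)

lemma kth_snapshot_le_iff:
  assumes "1 \<le> m" "m \<le> n"
  shows "kth (snapshot n pos s) m \<le> a \<longleftrightarrow> m \<le> card {j. j < n \<and> pos s j \<le> a}"
  using kth_downward_closed_iff[of m "snapshot n pos s" "\<lambda>y. y \<le> a"] assms
  by (simp add: length_filter_snapshot) (simp add: snapshot_def)

lemma card_filter_le_faulty_plus_correct:
  fixes n :: nat
  assumes "B \<subseteq> {..<n}"
  shows "card {j. j < n \<and> P j} \<le> card B + card {j \<in> {..<n} - B. P j}"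
proof -
  have "finite B"
    using assms finite_subset by blast
  then have "card {j. j < n \<and> P j} \<le> card (B \<union> {j \<in> {..<n} - B. P j})"
    by (intro card_mono) auto
  also have "\<dots> \<le> card B + card {j \<in> {..<n} - B. P j}"
    by (rule card_Un_le)
  finally show ?thesis .
qed

lemma card_correct_filter_le:
  fixes n :: nat
  shows "card {j \<in> {..<n} - B. P j} \<le> card {j. j < n \<and> P j}"
  by (intro card_mono) auto

lemma card_correct:
  fixes n :: nat
  assumes "B \<subseteq> {..<n}"
  shows "card ({..<n} - B) = n - card B"
  using assms by (simp add: card_Diff_subset finite_subset)

lemma dest_between:
  assumes "lo \<le> x" "x \<le> hi" "lo \<le> kth P (2 * f + 1)" "kth P (n - 2 * f) \<le> hi"
  shows "dest n f P x \<in> {lo..hi}"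
proof -
  define a where "a = min x (kth P (2 * f + 1))"
  define b where "b = max x (kth P (n - 2 * f))"
  have "a \<in> {lo..hi}" "b \<in> {lo..hi}"
    using assms unfolding a_def b_def by auto
  moreover have "dest n f P x \<in> {x, (a + b) / 2}"
    unfolding dest_def a_def b_def by simp
  ultimately show ?thesis
    using assms(1,2) by auto
qed

lemma dest_snapshot_in_correct_hull:
  assumes n: "2 * f < n" and B: "B \<subseteq> {..<n}" "card B \<le> f" and i: "i \<in> {..<n} - B"
  shows "dest n f (snapshot n pos s) (pos s i)
           \<in> {Min (pos s ` ({..<n} - B)) .. Max (pos s ` ({..<n} - B))}"
proof -
  let ?P = "snapshot n pos s"
  define lo where "lo = Min (pos s ` ({..<n} - B))"
  define hi where "hi = Max (pos s ` ({..<n} - B))"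
  have lo: "\<And>j. j \<in> {..<n} - B \<Longrightarrow> lo \<le> pos s j" and hi: "\<And>j. j \<in> {..<n} - B \<Longrightarrow> pos s j \<le> hi"
    unfolding lo_def hi_def by auto
  have "{j \<in> {..<n} - B. pos s j < lo} = {}"
    using lo by force
  then have "card {j. j < n \<and> pos s j < lo} \<le> card B"
    using card_filter_le_faulty_plus_correct[OF B(1), of "\<lambda>j. pos s j < lo"]
    unfolding \<open>{j \<in> {..<n} - B. pos s j < lo} = {}\<close> by simp
  then have lo_kth: "lo \<le> kth ?P (2 * f + 1)"
    using kth_snapshot_less_iff[of "2 * f + 1" n pos s lo] n B(2) by (simp add: not_less[symmetric])
  have "{j \<in> {..<n} - B. pos s j \<le> hi} = {..<n} - B"
    using hi by auto
  then have "card ({..<n} - B) \<le> card {j. j < n \<and> pos s j \<le> hi}"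
    using card_correct_filter_le[of n B "\<lambda>j. pos s j \<le> hi"] by simp
  then have kth_hi: "kth ?P (n - 2 * f) \<le> hi"
    using kth_snapshot_le_iff[of "n - 2 * f" n pos s hi] n B card_correct[OF B(1)] by simp
  show ?thesis
    unfolding lo_def[symmetric] hi_def[symmetric]
    using lo[OF i] hi[OF i] lo_kth kth_hi by (rule dest_between)
qed

lemma dest_fixed_le_kth:
  assumes "x \<le> kth P (f + 1)" "x \<le> kth P (2 * f + 1)" "dest n f P x = x"
  shows "kth P (n - 2 * f) \<le> x"
proof -
  from assms have "(x + max x (kth P (n - 2 * f))) / 2 = x"
    by (simp add: dest_def)
  then show ?thesis
    by (simp add: max_def split: if_splits)
qed

lemma dest_fixed_ge_kth:
  assumes "kth P (n - f) \<le> x" "kth P (n - 2 * f) \<le> x" "dest n f P x = x"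
  shows "x \<le> kth P (2 * f + 1)"
proof -
  from assms have "(min x (kth P (2 * f + 1)) + x) / 2 = x"
    by (simp add: dest_def)
  then show ?thesis
    by (simp add: min_def split: if_splits)
qed

lemma card_at_min_if_dest_fixed:
  fixes n :: nat
  assumes n: "2 * f < n" and B: "B \<subseteq> {..<n}" "card B \<le> f" and i: "i \<in> {..<n} - B"
    and min: "pos s i = Min (pos s ` ({..<n} - B))"
    and fixed: "dest n f (snapshot n pos s) (pos s i) = pos s i"
  shows "n - 2 * f \<le> card B + card {j \<in> {..<n} - B. pos s j = pos s i}"
proof -
  let ?P = "snapshot n pos s" and ?m = "pos s i"
  have above: "\<And>j. j \<in> {..<n} - B \<Longrightarrow> ?m \<le> pos s j"
    unfolding min by auto
  then have "{j \<in> {..<n} - B. pos s j < ?m} = {}"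
    by force
  then have "card {j. j < n \<and> pos s j < ?m} \<le> f"
    using card_filter_le_faulty_plus_correct[OF B(1), of "\<lambda>j. pos s j < ?m"] B(2)
    unfolding \<open>{j \<in> {..<n} - B. pos s j < ?m} = {}\<close> by simp
  then have "?m \<le> kth ?P (f + 1)" "?m \<le> kth ?P (2 * f + 1)"
    using kth_snapshot_less_iff[of "f + 1" n pos s ?m] kth_snapshot_less_iff[of "2 * f + 1" n pos s ?m] n
    by (simp_all add: not_less[symmetric])
  then have "kth ?P (n - 2 * f) \<le> ?m"
    using fixed by (rule dest_fixed_le_kth)
  then have "n - 2 * f \<le> card {j. j < n \<and> pos s j \<le> ?m}"
    using kth_snapshot_le_iff[of "n - 2 * f" n pos s ?m] n by simp
  also have "\<dots> \<le> card B + card {j \<in> {..<n} - B. pos s j \<le> ?m}"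
    by (rule card_filter_le_faulty_plus_correct[OF B(1)])
  also have "{j \<in> {..<n} - B. pos s j \<le> ?m} = {j \<in> {..<n} - B. pos s j = ?m}"
    using above by force
  finally show ?thesis .
qed

lemma card_at_max_if_dest_fixed:
  fixes n :: nat
  assumes n: "2 * f < n" and B: "B \<subseteq> {..<n}" "card B \<le> f" and i: "i \<in> {..<n} - B"
    and max: "pos s i = Max (pos s ` ({..<n} - B))"
    and fixed: "dest n f (snapshot n pos s) (pos s i) = pos s i"
  shows "n - card B \<le> 2 * f + card {j \<in> {..<n} - B. pos s j = pos s i}"
proof -
  let ?P = "snapshot n pos s" and ?M = "pos s i"
  have below: "\<And>j. j \<in> {..<n} - B \<Longrightarrow> pos s j \<le> ?M"
    unfolding max by auto
  then have "{j \<in> {..<n} - B. pos s j \<le> ?M} = {..<n} - B"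
    by auto
  then have "n - card B \<le> card {j. j < n \<and> pos s j \<le> ?M}"
    using card_correct_filter_le[of n B "\<lambda>j. pos s j \<le> ?M"] card_correct[OF B(1)] by simp
  then have "kth ?P (n - f) \<le> ?M" "kth ?P (n - 2 * f) \<le> ?M"
    using kth_snapshot_le_iff[of "n - f" n pos s ?M] kth_snapshot_le_iff[of "n - 2 * f" n pos s ?M] n B(2)
    by simp_all
  then have "?M \<le> kth ?P (2 * f + 1)"
    using fixed by (rule dest_fixed_ge_kth)
  then have strictly_below: "card {j. j < n \<and> pos s j < ?M} \<le> 2 * f"
    using kth_snapshot_less_iff[of "2 * f + 1" n pos s ?M] n by (simp add: not_less[symmetric])
  have "{..<n} - B \<subseteq> {j \<in> {..<n} - B. pos s j < ?M} \<union> {j \<in> {..<n} - B. pos s j = ?M}"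
    using below by (auto simp: le_less)
  then have "n - card B
      \<le> card ({j \<in> {..<n} - B. pos s j < ?M} \<union> {j \<in> {..<n} - B. pos s j = ?M})"
    unfolding card_correct[OF B(1), symmetric] by (intro card_mono) auto
  also have "\<dots> \<le> card {j \<in> {..<n} - B. pos s j < ?M} + card {j \<in> {..<n} - B. pos s j = ?M}"
    by (rule card_Un_le)
  also have "\<dots> \<le> 2 * f + card {j \<in> {..<n} - B. pos s j = ?M}"
    using strictly_below card_correct_filter_le[of n B "\<lambda>j. pos s j < ?M"] by simp
  finally show ?thesis .
qed

lemma continuous_on_countable_image_const:
  fixes g :: "'a::topological_space \<Rightarrow> 'b::metric_space"
  assumes "connected S" "continuous_on S g" "countable (g ` S)" "a \<in> S" "b \<in> S"
  shows "g a = g b"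
proof (rule ccontr)
  assume "g a \<noteq> g b"
  moreover have "connected (g ` S)"
    using assms(2,1) by (rule connected_continuous_image)
  ultimately have "uncountable (g ` S)"
    using assms(4,5) by (intro connected_uncountable) auto
  with assms(3) show False by simp
qed

lemma trajectory_continuous_on:
  fixes g :: "real \<Rightarrow> real" and L E :: "nat \<Rightarrow> real"
  assumes L0: "0 \<le> L 0" and LE: "\<And>k. L k \<le> E k" and EL: "\<And>k. E k \<le> L (Suc k)"
    and init: "\<forall>s \<in> {0..L 0}. g s = g 0"
    and move: "\<And>k. continuous_on {L k..E k} g"
    and idle: "\<And>k. \<forall>s \<in> {E k..L (Suc k)}. g s = g (E k)"
  shows "continuous_on {0..L k} g"
proof (induction k)
  case 0
  have "g x = g 0" if "x \<in> {0..L 0}" for x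
    using init that by blast
  then show ?case
    using continuous_on_eq[OF continuous_on_const[of _ "g 0"]] by metis
next
  case (Suc k)
  have "L k \<le> L (Suc k)" for k
    using LE[of k] EL[of k] by linarith
  then have "L 0 \<le> L k"
    by (rule lift_Suc_mono_le) simp
  then have split: "{0..L (Suc k)} = ({0..L k} \<union> {L k..E k}) \<union> {E k..L (Suc k)}"
    using L0 LE[of k] EL[of k] by auto
  have "g x = g (E k)" if "x \<in> {E k..L (Suc k)}" for x
    using idle that by blast
  then have "continuous_on {E k..L (Suc k)} g"
    using continuous_on_eq[OF continuous_on_const[of _ "g (E k)"]] by metis
  then show ?case
    unfolding split by (intro continuous_on_closed_Un closed_Un closed_atLeastAtMost Suc.IH move)
qed

lemma trajectory_const_after:
  fixes g :: "real \<Rightarrow> real" and L E :: "nat \<Rightarrow> real"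
  assumes L0: "0 \<le> L 0" and LE: "\<And>k. L k \<le> E k" and EL: "\<And>k. E k \<le> L (Suc k)"
    and init: "\<forall>s \<in> {0..L 0}. g s = g 0"
    and move: "\<And>k. continuous_on {L k..E k} g"
    and idle: "\<And>k. \<forall>s \<in> {E k..L (Suc k)}. g s = g (E k)"
    and unbounded: "\<And>T. \<exists>k. T < L k"
    and t: "0 \<le> t" and S: "countable S" and in_S: "\<And>s. t < s \<Longrightarrow> L 0 \<le> s \<Longrightarrow> g s \<in> S"
    and s: "t \<le> s"
  shows "g s = g t"
proof -
  obtain k where k: "s < L k"
    using unbounded by blast
  have "{t..L k} \<subseteq> {0..L k}"
    using t by auto
  then have cont: "continuous_on {t..L k} g"
    by (rule continuous_on_subset[OF trajectory_continuous_on[of L E g k, OF L0 LE EL init move idle]])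
  have "g v \<in> insert (g t) S" if v: "v \<in> {t..L k}" for v
  proof (cases "t < v \<and> L 0 \<le> v")
    case True
    then show ?thesis using in_S by simp
  next
    case False
    have "g v = g t"
    proof (cases "v = t")
      case False
      with \<open>\<not> (t < v \<and> L 0 \<le> v)\<close> v t have "v \<in> {0..L 0}" "t \<in> {0..L 0}"
        by auto
      then have "g v = g 0" "g t = g 0"
        using init by blast+
      then show ?thesis by simp
    qed simp
    then show ?thesis by simp
  qed
  then have "g ` {t..L k} \<subseteq> insert (g t) S"
    by blast
  then have "countable (g ` {t..L k})"
    by (rule countable_subset) (simp add: S)
  moreover have "s \<in> {t..L k}" "t \<in> {t..L k}"
    using s k by auto
  ultimately show ?thesis
    by (rule continuous_on_countable_image_const[OF connected_Icc cont])
qed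

lemma corda_execution_faulty:
  assumes "corda_execution n f B \<delta> pos L E"
  shows "B \<subseteq> {..<n}" "card B \<le> f"
  using assms unfolding corda_execution_def by blast+

lemma corda_execution_correctD:
  assumes "corda_execution n f B \<delta> pos L E" and "i \<in> {..<n} - B"
  shows "0 \<le> L i 0" "strict_mono (L i)" "L i k \<le> E i k" "E i k \<le> L i (Suc k)"
    "\<exists>k. T < L i k"
    "\<forall>s \<in> {0..L i 0}. pos s i = pos 0 i"
    "continuous_on {L i k..E i k} (\<lambda>s. pos s i)"
    "\<forall>s \<in> {E i k..L i (Suc k)}. pos s i = pos (E i k) i"
  using assms unfolding corda_execution_def Let_def strict_mono_Suc_iff by blast+

lemma last_look_at_look:
  assumes "strict_mono (L i)"
  shows "last_look L i (L i k) = k"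
  unfolding last_look_def
  by (rule Greatest_equality) (use assms in \<open>auto simp: strict_mono_less_eq\<close>)

lemma correct_position_const_after:
  assumes exec: "corda_execution n f B \<delta> pos L E" and i: "i \<in> {..<n} - B" and t: "0 \<le> t"
    and quiet: "\<And>t'. t < t' \<Longrightarrow> L i 0 \<le> t' \<Longrightarrow> Dest n f pos L i t' = pos t' i"
    and s: "t \<le> s"
  shows "pos s i = pos t i"
proof (rule trajectory_const_after[where g = "\<lambda>s. pos s i"])
  show "countable (range (cycle_dest n f pos L i))"
    by simp
  show "pos s' i \<in> range (cycle_dest n f pos L i)" if "t < s'" "L i 0 \<le> s'" for s'
    using quiet[OF that] unfolding Dest_def by (metis rangeI)
qed (fact corda_execution_correctD[OF exec i] t s)+

lemma correct_positions_eq_if_quiet: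
  assumes n: "5 * f < n" and exec: "corda_execution n f B \<delta> pos L E" and t: "0 \<le> t"
    and quiet: "\<And>i t'. i \<in> {..<n} - B \<Longrightarrow> t < t' \<Longrightarrow> L i 0 \<le> t' \<Longrightarrow> Dest n f pos L i t' = pos t' i"
    and j: "j \<in> {..<n} - B" and j': "j' \<in> {..<n} - B"
  shows "pos t j = pos t j'"
proof -
  let ?C = "{..<n} - B"
  note B = corda_execution_faulty[OF exec]
  have n2: "2 * f < n"
    using n by simp
  have stay: "pos s i = pos t i" if "i \<in> ?C" "t \<le> s" for i s
    using correct_position_const_after[OF exec that(1) t quiet that(2)] that(1) by blast
  have fixed: "dest n f (snapshot n pos (L i k)) (pos (L i k) i) = pos (L i k) i"
    if i: "i \<in> ?C" and k: "t < L i k" for i k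
  proof -
    have "L i 0 \<le> L i k"
      using corda_execution_correctD(2)[OF exec i] by (simp add: strict_mono_less_eq)
    then have "Dest n f pos L i (L i k) = pos (L i k) i"
      using quiet[OF i k] by blast
    then show ?thesis
      unfolding Dest_def last_look_at_look[of L i, OF corda_execution_correctD(2)[OF exec i]] cycle_dest_def .
  qed
  have later_snapshot: "\<exists>s. dest n f (snapshot n pos s) (pos s i) = pos s i \<and> (\<forall>j \<in> ?C. pos s j = pos t j)"
    if i: "i \<in> ?C" for i
  proof -
    obtain k where k: "t < L i k"
      using corda_execution_correctD(5)[OF exec i] by blast
    have "\<forall>j \<in> ?C. pos (L i k) j = pos t j"
      using stay k less_imp_le by blast
    then show ?thesis
      using fixed[OF i k] by blast
  qed
  define m where "m = Min (pos t ` ?C)"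
  define M where "M = Max (pos t ` ?C)"
  obtain i1 where i1: "i1 \<in> ?C" "pos t i1 = m"
    using Min_in[of "pos t ` ?C"] j unfolding m_def by fastforce
  obtain i2 where i2: "i2 \<in> ?C" "pos t i2 = M"
    using Max_in[of "pos t ` ?C"] j unfolding M_def by fastforce
  obtain s1 where s1: "dest n f (snapshot n pos s1) (pos s1 i1) = pos s1 i1" "\<forall>j \<in> ?C. pos s1 j = pos t j"
    using later_snapshot[OF i1(1)] by blast
  obtain s2 where s2: "dest n f (snapshot n pos s2) (pos s2 i2) = pos s2 i2" "\<forall>j \<in> ?C. pos s2 j = pos t j"
    using later_snapshot[OF i2(1)] by blast
  have img: "pos s1 ` ?C = pos t ` ?C" "pos s2 ` ?C = pos t ` ?C"
    using s1(2) s2(2) by (auto intro: image_cong)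
  have "pos s1 i1 = Min (pos s1 ` ?C)"
    using img i1 s1(2) unfolding m_def by simp
  from card_at_min_if_dest_fixed[OF n2 B i1(1) this s1(1)]
  have at_min: "n - 2 * f \<le> card B + card {j \<in> ?C. pos t j = m}"
    using s1(2) i1 by (simp cong: conj_cong)
  have "pos s2 i2 = Max (pos s2 ` ?C)"
    using img i2 s2(2) unfolding M_def by simp
  from card_at_max_if_dest_fixed[OF n2 B i2(1) this s2(1)]
  have at_max: "n - card B \<le> 2 * f + card {j \<in> ?C. pos t j = M}"
    using s2(2) i2 by (simp cong: conj_cong)
  have "m = M"
  proof (rule ccontr)
    assume "m \<noteq> M"
    have fin: "finite {j \<in> ?C. P j}" for P
      by (rule finite_subset[of _ "{..<n}"]) auto
    have "card {j \<in> ?C. pos t j = m} + card {j \<in> ?C. pos t j = M}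
        = card ({j \<in> ?C. pos t j = m} \<union> {j \<in> ?C. pos t j = M})"
      using \<open>m \<noteq> M\<close> by (intro card_Un_disjoint[symmetric] fin) auto
    also have "\<dots> \<le> card ?C"
      by (intro card_mono) auto
    finally show False
      using at_min at_max card_correct[OF B(1)] B(2) n by linarith
  qed
  moreover have "m \<le> pos t j'" "pos t j \<le> M" "m \<le> pos t j" "pos t j' \<le> M"
    using j j' unfolding m_def M_def by auto
  ultimately show ?thesis
    by linarith
qed

theorem lemma7:
  fixes n f :: nat and B :: "nat set" and \<delta> :: "nat \<Rightarrow> real"
    and pos :: "real \<Rightarrow> nat \<Rightarrow> real" and L E :: "nat \<Rightarrow> nat \<Rightarrow> real"
  assumes "n > 5 * f"
    and "corda_execution n f B \<delta> pos L E"
  shows "cautious n f B pos L"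
proof -
  note B = corda_execution_faulty[OF assms(2)]
  have "Dest n f pos L i t \<in> {Min (Obs n B pos L i t) .. Max (Obs n B pos L i t)}"
    if "i \<in> {..<n} - B" for i t
    using dest_snapshot_in_correct_hull[OF _ B that] assms(1)
    unfolding Dest_def Obs_def cycle_dest_def by simp
  moreover have "\<exists>i \<in> {..<n} - B. \<exists>t' > t. L i 0 \<le> t' \<and> Dest n f pos L i t' \<noteq> pos t' i"
    if "0 \<le> t" and "j \<in> {..<n} - B" "j' \<in> {..<n} - B" "pos t j \<noteq> pos t j'" for t j j'
    using correct_positions_eq_if_quiet[OF assms that(1) _ that(2,3)] that(4) by blast
  ultimately show ?thesis
    unfolding cautious_def by blast
qed

end
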